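(* Let $H$ be a real Hilbert space, $A:H\to c_0$ bounded linear with adjoint $A^*:\ell^1\to H$ (identifying $c_0^*=\ell^1$), let $H_n\subset H$ be a subspace of dimension $n$ with $\mathcal N(A)\cap H_n=\{0\}$. Let $f\in H$, let $u^\dagger\in\ell^1$ satisfy $A^*u^\dagger=f$, let $\delta>0$ and $f^\delta\in H$ with $\|f^\delta-f\|\le\delta$. Then every solution $u^n$ of $$\min_{u\in\ell^1}\|u\|_1\quad\text{subject to}\quad \langle z,A^*u\rangle=\langle z,f^\delta\rangle\ \ \forall z\in H_n$$ satisfies $\|u^n\|_1\le \delta\kappa_n+\|u^\dagger\|_1$.
   Context: $\kappa_n=\sup_{z\in H_n\setminus\{0\}}\dfrac{\|z\|}{\|Az\|_\infty}=\Big(\inf_{z\in H_n,\|z\|=1}\|Az\|_\infty\Big)^{-1}$, which is finite under $\mathcal N(A)\cap H_n=\{0\}$. $A^*$ is defined by $\langle A^*u,z\rangle=\sum_iu_i(Az)_i$. *)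

theory Defs
  imports "HOL-Analysis.Analysis"
begin

text \<open>Sequences in c_0 / l^1 are modelled as functions nat => real.\<close>

definition bounded_lin_to_c0 :: "('h::real_normed_vector \<Rightarrow> nat \<Rightarrow> real) \<Rightarrow> bool" where
  "bounded_lin_to_c0 A \<longleftrightarrow>
     (\<forall>i. linear (\<lambda>z. A z i)) \<and>
     (\<exists>C. \<forall>z i. \<bar>A z i\<bar> \<le> C * norm z) \<and>
     (\<forall>z. (\<lambda>i. A z i) \<longlonglongrightarrow> 0)"

definition in_l1 :: "(nat \<Rightarrow> real) \<Rightarrow> bool" where
  "in_l1 u \<longleftrightarrow> summable (\<lambda>i. \<bar>u i\<bar>)"

definition norm1 :: "(nat \<Rightarrow> real) \<Rightarrow> real" where
  "norm1 u = (\<Sum>i. \<bar>u i\<bar>)"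

definition norm_inf :: "(nat \<Rightarrow> real) \<Rightarrow> real" where
  "norm_inf x = (SUP i. \<bar>x i\<bar>)"

definition is_adj_image :: "('h::real_inner \<Rightarrow> nat \<Rightarrow> real) \<Rightarrow> (nat \<Rightarrow> real) \<Rightarrow> 'h \<Rightarrow> bool" where
  "is_adj_image A u w \<longleftrightarrow> (\<forall>z. inner w z = (\<Sum>i. u i * A z i))"

definition kappa :: "('h::real_normed_vector \<Rightarrow> nat \<Rightarrow> real) \<Rightarrow> 'h set \<Rightarrow> real" where
  "kappa A Hn = inverse (Inf {norm_inf (A z) | z. z \<in> Hn \<and> norm z = 1})"

end

theory Submission
  imports Defs
begin

(* The minimiser is compared with the feasible competitor udag + v, where v is finitely
   supported, has l1-norm at most delta * kappa and A^* v agrees with fdelta - f on Hn.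
   To build v, let w i in Hn represent z |-> (A z) i on Hn and let p be the orthogonal
   projection of g = fdelta - f onto Hn.  The kernel condition makes finitely many w i span
   Hn, so norm z <= kappa * norm_inf (A z) there; together with w i --> 0 this shows that
   norm_inf (A a) is attained among the first M indices, uniformly in a in Hn.  Hence
   inner a p <= delta * norm a <= delta * kappa * max_{i<M} |inner a (w i)| for all a in Hn,
   so p cannot be separated from the convex hull of the points +-(delta * kappa) w i, i < M,
   and writing p as a convex combination of them yields v. *)

definition orth_proj :: "'a::real_inner set \<Rightarrow> 'a \<Rightarrow> 'a" where
  "orth_proj U z = (\<Sum>u\<in>U. (inner u z / inner u u) *\<^sub>R u)"

lemma orth_proj_in_span: "orth_proj U z \<in> span U"
  unfolding orth_proj_def by (intro span_sum span_scale span_base)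

lemma inner_orth_proj_residual:
  assumes "finite U" "pairwise orthogonal U" "u \<in> U"
  shows "inner u (z - orth_proj U z) = 0"
proof -
  have "inner u (orth_proj U z) = (\<Sum>v\<in>U. (inner v z / inner v v) * inner u v)"
    by (simp add: orth_proj_def inner_sum_right)
  also have "\<dots> = (inner u z / inner u u) * inner u u
                   + (\<Sum>v\<in>U-{u}. (inner v z / inner v v) * inner u v)"
    using assms by (simp add: sum.remove)
  also have "(\<Sum>v\<in>U-{u}. (inner v z / inner v v) * inner u v) = 0"
    using assms by (intro sum.neutral) (auto simp: pairwise_def orthogonal_def)
  also have "(inner u z / inner u u) * inner u u = inner u z"
    by (cases "u = 0") auto
  finally show ?thesis by (simp add: inner_diff_right)
qed

lemma inner_span_orth_proj_residual:
  assumes "finite U" "pairwise orthogonal U" "x \<in> span U"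
  shows "inner x (z - orth_proj U z) = 0"
proof -
  have "orthogonal (z - orth_proj U z) x"
    by (rule orthogonal_to_span[OF assms(3)])
       (metis assms(1,2) inner_orth_proj_residual orthogonal_def inner_commute)
  then show ?thesis by (simp add: orthogonal_def inner_commute)
qed

lemma inner_orth_proj_eq:
  assumes "finite U" "pairwise orthogonal U" "x \<in> span U"
  shows "inner x (orth_proj U z) = inner x z"
  using inner_span_orth_proj_residual[OF assms] by (simp add: inner_diff_right)

lemma orth_proj_id:
  assumes "finite U" "pairwise orthogonal U" "z \<in> span U"
  shows "orth_proj U z = z"
proof -
  have "z - orth_proj U z \<in> span U"
    using assms orth_proj_in_span span_diff by blast
  then have "inner (z - orth_proj U z) (z - orth_proj U z) = 0"
    using inner_span_orth_proj_residual assms by blast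
  then show ?thesis by simp
qed

lemma finite_orthogonal_spanning_set:
  fixes T :: "'a::real_inner set"
  assumes "finite T"
  obtains U where "finite U" "pairwise orthogonal U" "span U = span T"
  using assms
proof (induction T arbitrary: thesis rule: finite_induct)
  case empty
  show ?case by (rule empty.prems[of "{}"]) auto
next
  case (insert a T)
  then obtain U where U: "finite U" "pairwise orthogonal U" "span U = span T" by blast
  define a' where "a' = a - orth_proj U a"
  have "orthogonal a' u" if "u \<in> U" for u
    using inner_orth_proj_residual[OF U(1,2) that, of a]
    by (simp add: a'_def orthogonal_def inner_commute)
  then have "pairwise orthogonal (insert a' U)"
    using pairwise_orthogonal_insert[OF U(2)] by blast
  moreover have "span (insert a' U) = span (insert a T)"
  proof -
    have "span (insert a' U) = span (insert a U)"
      by (rule eq_span_insert_eq) (simp add: a'_def orth_proj_in_span span_neg)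
    also have "\<dots> = span (insert a T)" by (simp only: span_insert U(3))
    finally show ?thesis .
  qed
  ultimately show ?case using U(1) insert.prems by blast
qed

lemma finite_dim_subspace_orthogonal_basis:
  fixes S :: "'a::real_inner set"
  assumes "subspace S" "dim S \<noteq> 0"
  obtains U where "finite U" "pairwise orthogonal U" "span U = S" "\<exists>b\<in>S. b \<noteq> 0"
proof -
  obtain B where B: "B \<subseteq> S" "independent B" "S \<subseteq> span B" "card B = dim S"
    using basis_exists by blast
  have "finite B" using B(4) assms(2) card.infinite by fastforce
  have "B \<noteq> {}" using B(4) assms(2) by auto
  then obtain b where "b \<in> S" "b \<noteq> 0"
    using B(1,2) dependent_zero by blast
  moreover obtain U where "finite U" "pairwise orthogonal U" "span U = span B"
    using finite_orthogonal_spanning_set[OF \<open>finite B\<close>] .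
  moreover have "span B = S" using B assms(1) span_subspace by blast
  ultimately show ?thesis using that by blast
qed

definition riesz_rep :: "'a::real_inner set \<Rightarrow> ('a \<Rightarrow> real) \<Rightarrow> 'a" where
  "riesz_rep U \<phi> = (\<Sum>u\<in>U. (\<phi> u / inner u u) *\<^sub>R u)"

lemma riesz_rep_in_span: "riesz_rep U \<phi> \<in> span U"
  unfolding riesz_rep_def by (intro span_sum span_scale span_base)

lemma inner_riesz_rep:
  assumes "linear \<phi>" "finite U" "pairwise orthogonal U" "z \<in> span U"
  shows "inner (riesz_rep U \<phi>) z = \<phi> z"
proof -
  have "\<phi> z = \<phi> (orth_proj U z)" using orth_proj_id[OF assms(2-4)] by simp
  also have "\<dots> = (\<Sum>u\<in>U. (inner u z / inner u u) * \<phi> u)"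
    unfolding orth_proj_def by (simp add: linear_sum[OF assms(1)] linear_scale[OF assms(1)])
  also have "\<dots> = inner (riesz_rep U \<phi>) z"
    unfolding riesz_rep_def inner_sum_left by (intro sum.cong refl) (simp add: algebra_simps)
  finally show ?thesis by simp
qed

lemma riesz_rep_tendsto_zero:
  assumes "\<And>u. (\<lambda>i. \<phi> i u) \<longlonglongrightarrow> 0"
  shows "(\<lambda>i. riesz_rep U (\<phi> i)) \<longlonglongrightarrow> 0"
  unfolding riesz_rep_def
proof (rule tendsto_null_sum)
  fix u
  have "(\<lambda>i. (\<phi> i u / inner u u) *\<^sub>R u) \<longlonglongrightarrow> 0 *\<^sub>R u"
    by (intro tendsto_scaleR tendsto_divide_zero assms tendsto_const)
  then show "(\<lambda>i. (\<phi> i u / inner u u) *\<^sub>R u) \<longlonglongrightarrow> 0" by simp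
qed

lemma range_subset_span_initial_segment:
  fixes w :: "nat \<Rightarrow> 'a::real_vector"
  assumes "finite U" "range w \<subseteq> span U"
  obtains N where "range w \<subseteq> span (w ` {..<N})"
proof -
  obtain B where B: "B \<subseteq> range w" "independent B" "range w \<subseteq> span B"
    using maximal_independent_subset by blast
  have "finite B"
    using independent_span_bound[OF assms(1) B(2)] B(1) assms(2) by blast
  then obtain I where "finite I" "B = w ` I"
    using finite_subset_image[OF _ B(1)] by blast
  moreover obtain N where "I \<subseteq> {..<N}" using finite_nat_bounded[OF \<open>finite I\<close>] by blast
  ultimately have "span B \<subseteq> span (w ` {..<N})" by (intro span_mono) auto
  then show ?thesis using B(3) that by blast
qed

lemma subset_span_if_orthogonal_only_zero:
  fixes W :: "'a::real_inner set"
  assumes "finite W" "subspace S" "W \<subseteq> S"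
    and only_zero: "\<And>z. z \<in> S \<Longrightarrow> (\<forall>v\<in>W. inner v z = 0) \<Longrightarrow> z = 0"
  shows "S \<subseteq> span W"
proof
  fix z assume z: "z \<in> S"
  obtain V where V: "finite V" "pairwise orthogonal V" "span V = span W"
    using finite_orthogonal_spanning_set[OF assms(1)] .
  have "orth_proj V z \<in> S"
    using orth_proj_in_span[of V z] V(3) span_minimal[OF assms(3,2)] by blast
  then have "z - orth_proj V z \<in> S" using z assms(2) subspace_diff by blast
  moreover have "\<forall>v\<in>W. inner v (z - orth_proj V z) = 0"
    using inner_span_orth_proj_residual[OF V(1,2)] V(3) span_base by blast
  ultimately have "z = orth_proj V z" using only_zero by fastforce
  then show "z \<in> span W" using orth_proj_in_span[of V z] V(3) by simp
qed

lemma norm_le_of_inner_bound: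
  fixes U W :: "'a::real_inner set"
  assumes "finite U" "pairwise orthogonal U" "finite W" "U \<subseteq> span W"
  obtains C where "\<And>z B. z \<in> span U \<Longrightarrow> 0 \<le> B \<Longrightarrow> (\<And>v. v \<in> W \<Longrightarrow> \<bar>inner v z\<bar> \<le> B)
       \<Longrightarrow> norm z \<le> C * B"
proof -
  have "\<forall>u\<in>U. \<exists>c. u = (\<Sum>v\<in>W. c v *\<^sub>R v)"
    using assms(4) unfolding span_finite[OF assms(3)] by blast
  then obtain c where c: "\<And>u. u \<in> U \<Longrightarrow> u = (\<Sum>v\<in>W. c u v *\<^sub>R v)"
    by metis
  define C where "C = (\<Sum>u\<in>U. (\<Sum>v\<in>W. \<bar>c u v\<bar>) * norm u / inner u u)"
  have "norm z \<le> C * B"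
    if z: "z \<in> span U" and "0 \<le> B" and bound: "\<And>v. v \<in> W \<Longrightarrow> \<bar>inner v z\<bar> \<le> B" for z B
  proof -
    have "norm z = norm (\<Sum>u\<in>U. (inner u z / inner u u) *\<^sub>R u)"
      using orth_proj_id[OF assms(1,2) z] by (simp add: orth_proj_def)
    also have "\<dots> \<le> (\<Sum>u\<in>U. (\<Sum>v\<in>W. \<bar>c u v\<bar>) * norm u / inner u u * B)"
    proof (intro order_trans[OF norm_sum] sum_mono)
      fix u assume u: "u \<in> U"
      have "\<bar>inner u z\<bar> = \<bar>\<Sum>v\<in>W. c u v * inner v z\<bar>"
        by (subst c[OF u]) (simp add: inner_sum_left)
      also have "\<dots> \<le> (\<Sum>v\<in>W. \<bar>c u v\<bar> * B)"
        by (rule order_trans[OF sum_abs]) (auto intro!: sum_mono mult_left_mono bound simp: abs_mult)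
      finally have "\<bar>inner u z\<bar> \<le> (\<Sum>v\<in>W. \<bar>c u v\<bar>) * B" by (simp add: sum_distrib_right)
      then have "\<bar>inner u z\<bar> * norm u / inner u u \<le> (\<Sum>v\<in>W. \<bar>c u v\<bar>) * B * norm u / inner u u"
        by (intro divide_right_mono mult_right_mono) auto
      then show "norm ((inner u z / inner u u) *\<^sub>R u) \<le> (\<Sum>v\<in>W. \<bar>c u v\<bar>) * norm u / inner u u * B"
        by (simp add: ac_simps)
    qed
    also have "\<dots> = C * B"
      unfolding C_def by (rule sum_distrib_right[symmetric])
    finally show ?thesis .
  qed
  then show ?thesis using that by blast
qed

lemma norm_inf_ge:
  assumes "x \<longlonglongrightarrow> 0"
  shows "\<bar>x i\<bar> \<le> norm_inf x"
proof -
  obtain K where "\<And>n. norm (x n) \<le> K"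
    using convergent_imp_Bseq[OF convergentI[OF assms]] unfolding Bseq_def by blast
  then have "bdd_above (range (\<lambda>i. \<bar>x i\<bar>))" by (auto intro!: bdd_aboveI[of _ K])
  then show ?thesis unfolding norm_inf_def by (rule cSUP_upper[OF UNIV_I])
qed

lemma norm_inf_nonneg: "x \<longlonglongrightarrow> 0 \<Longrightarrow> 0 \<le> norm_inf x"
  using norm_inf_ge[of x 0] by linarith

lemma norm_inf_le:
  assumes "\<And>i. \<bar>x i\<bar> \<le> B"
  shows "norm_inf x \<le> B"
  unfolding norm_inf_def using assms by (intro cSUP_least) auto

lemma norm_inf_attained_below:
  assumes "\<And>i. i \<ge> M \<Longrightarrow> \<bar>x i\<bar> \<le> c" "c < norm_inf x"
  obtains i where "i < M" "norm_inf x \<le> \<bar>x i\<bar>"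
proof -
  have "\<exists>i<M. norm_inf x \<le> \<bar>x i\<bar>"
  proof (rule ccontr)
    assume "\<not> ?thesis"
    then have small: "\<And>i. i < M \<Longrightarrow> \<bar>x i\<bar> < norm_inf x" by auto
    define B where "B = Max (insert c ((\<lambda>i. \<bar>x i\<bar>) ` {..<M}))"
    have "\<bar>x i\<bar> \<le> B" for i
      using assms(1)[of i] by (cases "i < M") (auto simp: B_def intro: order_trans[OF _ Max_ge])
    then have "norm_inf x \<le> B" by (rule norm_inf_le)
    moreover have "B < norm_inf x"
      unfolding B_def using assms(2) small by (subst Max_less_iff) auto
    ultimately show False by simp
  qed
  then show ?thesis using that by blast
qed

lemma kappa_pos_and_norm_le_of_coercive:
  fixes A :: "'h::real_normed_vector \<Rightarrow> nat \<Rightarrow> real"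
  assumes A: "bounded_lin_to_c0 A" and "subspace Hn" "b \<in> Hn" "b \<noteq> 0"
    and C: "\<forall>z\<in>Hn. norm z \<le> C * norm_inf (A z)"
  shows "kappa A Hn > 0" "\<And>z. z \<in> Hn \<Longrightarrow> norm z \<le> kappa A Hn * norm_inf (A z)"
proof -
  have lin: "\<And>i. linear (\<lambda>z. A z i)" and c0: "\<And>z. (\<lambda>i. A z i) \<longlonglongrightarrow> 0"
    using A unfolding bounded_lin_to_c0_def by auto
  define S where "S = {norm_inf (A z) | z. z \<in> Hn \<and> norm z = 1}"
  define \<mu> where "\<mu> = Inf S"
  have kappa: "kappa A Hn = inverse \<mu>" unfolding kappa_def \<mu>_def S_def by simp
  have "b /\<^sub>R norm b \<in> Hn" "norm (b /\<^sub>R norm b) = 1"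
    using assms(2-4) subspace_scale by auto
  then have "S \<noteq> {}" unfolding S_def by blast
  have "bdd_below S"
    unfolding S_def by (rule bdd_belowI[of _ 0]) (auto simp: norm_inf_nonneg[OF c0])
  have "C > 0"
  proof (rule ccontr)
    assume "\<not> C > 0"
    then have "C * norm_inf (A (b /\<^sub>R norm b)) \<le> 0"
      by (simp add: mult_nonpos_nonneg norm_inf_nonneg[OF c0])
    then show False
      using C \<open>b /\<^sub>R norm b \<in> Hn\<close> \<open>norm (b /\<^sub>R norm b) = 1\<close> by fastforce
  qed
  have "1 / C \<le> \<mu>" unfolding \<mu>_def
  proof (rule cInf_greatest[OF \<open>S \<noteq> {}\<close>])
    fix s assume "s \<in> S"
    then obtain z where "z \<in> Hn" "norm z = 1" "s = norm_inf (A z)" unfolding S_def by blast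
    with C have "1 \<le> C * s" by auto
    then show "1 / C \<le> s" using \<open>C > 0\<close> by (simp add: divide_le_eq mult.commute)
  qed
  then have "\<mu> > 0" using \<open>C > 0\<close> by (meson less_le_trans zero_less_divide_1_iff)
  then show "kappa A Hn > 0" by (simp add: kappa)
  show "norm x \<le> kappa A Hn * norm_inf (A x)" if x: "x \<in> Hn" for x
  proof (cases "x = 0")
    case True
    then show ?thesis using norm_inf_nonneg[OF c0, of x] \<open>\<mu> > 0\<close> by (simp add: kappa)
  next
    case False
    define z where "z = x /\<^sub>R norm x"
    have "z \<in> Hn" "norm z = 1" using x False assms(2) subspace_scale by (auto simp: z_def)
    then have "\<mu> \<le> norm_inf (A z)"
      unfolding \<mu>_def S_def by (intro cInf_lower[OF _ \<open>bdd_below S\<close>[unfolded S_def]]) blast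
    also have "norm_inf (A z) \<le> norm_inf (A x) / norm x"
    proof (rule norm_inf_le)
      fix i
      have "A z i = A x i / norm x"
        unfolding z_def using linear_scale[OF lin[of i]] by (simp add: divide_inverse mult.commute)
      then show "\<bar>A z i\<bar> \<le> norm_inf (A x) / norm x"
        using norm_inf_ge[OF c0, of x i] by (simp add: divide_right_mono)
    qed
    finally show ?thesis using False \<open>\<mu> > 0\<close> by (simp add: kappa field_simps)
  qed
qed

lemma norm_le_const_mul_norm_inf:
  fixes A :: "'h::real_inner \<Rightarrow> nat \<Rightarrow> real"
  assumes A: "bounded_lin_to_c0 A" and U: "finite U" "pairwise orthogonal U"
    and ker: "\<forall>z\<in>span U. (\<forall>i. A z i = 0) \<longrightarrow> z = 0"
  obtains C where "\<And>z. z \<in> span U \<Longrightarrow> norm z \<le> C * norm_inf (A z)"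
proof -
  have lin: "\<And>i. linear (\<lambda>z. A z i)" and c0: "\<And>z. (\<lambda>i. A z i) \<longlonglongrightarrow> 0"
    using A unfolding bounded_lin_to_c0_def by auto
  define w where "w i = riesz_rep U (\<lambda>z. A z i)" for i
  have hw: "inner (w i) z = A z i" if "z \<in> span U" for i z
    unfolding w_def using inner_riesz_rep[OF lin U that] .
  have "range w \<subseteq> span U" unfolding w_def using riesz_rep_in_span by blast
  then obtain N where N: "range w \<subseteq> span (w ` {..<N})"
    using range_subset_span_initial_segment[OF U(1)] by blast
  have "span U \<subseteq> span (w ` {..<N})"
  proof (rule subset_span_if_orthogonal_only_zero)
    fix z assume z: "z \<in> span U" and orth: "\<forall>v\<in>w ` {..<N}. inner v z = 0"
    have "A z i = 0" for i
    proof -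
      have "orthogonal z (w i)"
        by (rule orthogonal_to_span[of "w i" "w ` {..<N}"])
           (use N orth in \<open>auto simp: orthogonal_def inner_commute\<close>)
      then show ?thesis using hw[OF z] by (simp add: orthogonal_def inner_commute)
    qed
    then show "z = 0" using ker z by blast
  qed (use \<open>range w \<subseteq> span U\<close> in auto)
  then have "U \<subseteq> span (w ` {..<N})" using span_base by blast
  then obtain C where C: "\<And>z B. z \<in> span U \<Longrightarrow> 0 \<le> B
      \<Longrightarrow> (\<And>v. v \<in> w ` {..<N} \<Longrightarrow> \<bar>inner v z\<bar> \<le> B) \<Longrightarrow> norm z \<le> C * B"
    using norm_le_of_inner_bound[OF U finite_imageI[OF finite_lessThan]] by metis
  show ?thesis
  proof (rule that)
    fix z assume z: "z \<in> span U"
    show "norm z \<le> C * norm_inf (A z)"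
    proof (rule C[OF z norm_inf_nonneg[OF c0]])
      fix v assume "v \<in> w ` {..<N}"
      then show "\<bar>inner v z\<bar> \<le> norm_inf (A z)" using hw[OF z] norm_inf_ge[OF c0] by auto
    qed
  qed
qed

lemma kappa_pos_and_norm_le:
  fixes A :: "'h::real_inner \<Rightarrow> nat \<Rightarrow> real"
  assumes A: "bounded_lin_to_c0 A" and Hn: "subspace Hn" "dim Hn \<noteq> 0"
    and ker: "\<forall>z\<in>Hn. (\<forall>i. A z i = 0) \<longrightarrow> z = 0"
  shows "kappa A Hn > 0" "\<And>z. z \<in> Hn \<Longrightarrow> norm z \<le> kappa A Hn * norm_inf (A z)"
proof -
  obtain U where U: "finite U" "pairwise orthogonal U" "span U = Hn" and "\<exists>b\<in>Hn. b \<noteq> 0"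
    by (rule finite_dim_subspace_orthogonal_basis[OF Hn])
  then obtain b where b: "b \<in> Hn" "b \<noteq> 0" by blast
  have ker_span: "\<forall>z\<in>span U. (\<forall>i. A z i = 0) \<longrightarrow> z = 0" unfolding U(3) by (rule ker)
  obtain C where "\<And>z. z \<in> span U \<Longrightarrow> norm z \<le> C * norm_inf (A z)"
    using norm_le_const_mul_norm_inf[OF A U(1,2) ker_span] by metis
  then have "\<forall>z\<in>Hn. norm z \<le> C * norm_inf (A z)" unfolding U(3) by blast
  from kappa_pos_and_norm_le_of_coercive[OF A Hn(1) b this]
  show "kappa A Hn > 0" "\<And>z. z \<in> Hn \<Longrightarrow> norm z \<le> kappa A Hn * norm_inf (A z)" by blast+
qed

lemma compact_convex_separating_point:
  fixes p :: "'a::real_inner"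
  assumes "convex K" "compact K" "K \<noteq> {}" "p \<notin> K"
  obtains y where "y \<in> K" "\<And>x. x \<in> K \<Longrightarrow> inner (p - y) x \<le> inner (p - y) y"
proof -
  have "continuous_on K (dist p)" by (intro continuous_intros)
  then obtain y where y: "y \<in> K" "\<And>x. x \<in> K \<Longrightarrow> dist p y \<le> dist p x"
    using continuous_attains_inf[OF assms(2,3)] by blast
  have "inner (p - y) x \<le> inner (p - y) y" if x: "x \<in> K" for x
  proof (rule ccontr)
    assume "\<not> ?thesis"
    then have "inner (p - y) (x - y) > 0" by (simp add: inner_diff_right)
    then obtain u where u: "u > 0" "u \<le> 1" "dist (y + u *\<^sub>R (x - y)) p < dist y p"
      using closer_point_lemma by blast
    have "y + u *\<^sub>R (x - y) = (1 - u) *\<^sub>R y + u *\<^sub>R x" by (simp add: algebra_simps)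
    then have "y + u *\<^sub>R (x - y) \<in> K" using convexD_alt[OF assms(1) y(1) x] u by simp
    then have "dist p y \<le> dist p (y + u *\<^sub>R (x - y))" by (rule y(2))
    then show False using u(3) by (simp add: dist_commute)
  qed
  then show ?thesis using that y(1) by blast
qed

lemma mem_compact_convex_if_not_separated:
  assumes "subspace S" "convex K" "compact K" "K \<noteq> {}" "K \<subseteq> S" "p \<in> S"
    and not_separated: "\<And>a. a \<in> S \<Longrightarrow> a \<noteq> 0 \<Longrightarrow> \<exists>x\<in>K. inner a p \<le> inner a x"
  shows "p \<in> K"
proof (rule ccontr)
  assume "p \<notin> K"
  then obtain y where y: "y \<in> K" "\<And>x. x \<in> K \<Longrightarrow> inner (p - y) x \<le> inner (p - y) y"
    using compact_convex_separating_point assms(2-4) by blast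
  have "p - y \<in> S" "p - y \<noteq> 0" using assms(1,5,6) y(1) \<open>p \<notin> K\<close> subspace_diff by auto
  then obtain x where "x \<in> K" "inner (p - y) p \<le> inner (p - y) x" using not_separated by blast
  with y(2) have "inner (p - y) p \<le> inner (p - y) y" by (meson order_trans)
  then have "inner (p - y) (p - y) \<le> 0" by (simp add: inner_diff_right)
  then show False using \<open>p - y \<noteq> 0\<close> inner_gt_zero_iff[of "p - y"] by linarith
qed

lemma convex_hull_signed_subset_l1_ball:
  fixes w :: "nat \<Rightarrow> 'a::real_vector"
  assumes "finite I" "0 \<le> R"
  shows "convex hull ((\<lambda>i. R *\<^sub>R w i) ` I \<union> (\<lambda>i. (- R) *\<^sub>R w i) ` I)
           \<subseteq> {\<Sum>i\<in>I. v i *\<^sub>R w i | v. (\<Sum>i\<in>I. \<bar>v i\<bar>) \<le> R}"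
    (is "_ \<subseteq> ?L")
proof (rule hull_minimal)
  have "c *\<^sub>R w j \<in> ?L" if j: "j \<in> I" and "\<bar>c\<bar> \<le> R" for c j
  proof -
    define v where "v i = (if i = j then c else 0)" for i
    have "(\<Sum>i\<in>I. v i *\<^sub>R w i) = (\<Sum>i\<in>I. if i = j then c *\<^sub>R w i else 0)"
      by (rule sum.cong) (auto simp: v_def)
    also have "\<dots> = c *\<^sub>R w j" using j assms(1) by simp
    finally have "c *\<^sub>R w j = (\<Sum>i\<in>I. v i *\<^sub>R w i)" ..
    moreover have "(\<Sum>i\<in>I. \<bar>v i\<bar>) = (\<Sum>i\<in>I. if i = j then \<bar>c\<bar> else 0)"
      by (rule sum.cong) (auto simp: v_def)
    ultimately show ?thesis using j assms(1) that by auto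
  qed
  note mem = this
  have "R *\<^sub>R w j \<in> ?L" "(- R) *\<^sub>R w j \<in> ?L" if "j \<in> I" for j
    using mem[OF that, of R] mem[OF that, of "- R"] assms(2) by simp_all
  then show "(\<lambda>i. R *\<^sub>R w i) ` I \<union> (\<lambda>i. (- R) *\<^sub>R w i) ` I \<subseteq> ?L" by blast
  show "convex ?L"
  proof (rule convexI)
    fix x y and s t :: real
    assume "x \<in> ?L" "y \<in> ?L" "0 \<le> s" "0 \<le> t" "s + t = 1"
    then obtain vx vy where v: "x = (\<Sum>i\<in>I. vx i *\<^sub>R w i)" "(\<Sum>i\<in>I. \<bar>vx i\<bar>) \<le> R"
        "y = (\<Sum>i\<in>I. vy i *\<^sub>R w i)" "(\<Sum>i\<in>I. \<bar>vy i\<bar>) \<le> R"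
      by blast
    have "s *\<^sub>R x + t *\<^sub>R y = (\<Sum>i\<in>I. (s * vx i + t * vy i) *\<^sub>R w i)"
      by (simp add: v scaleR_sum_right sum.distrib scaleR_add_left)
    moreover have "(\<Sum>i\<in>I. \<bar>s * vx i + t * vy i\<bar>) \<le> s * (\<Sum>i\<in>I. \<bar>vx i\<bar>) + t * (\<Sum>i\<in>I. \<bar>vy i\<bar>)"
      unfolding sum_distrib_left sum.distrib[symmetric]
      using \<open>0 \<le> s\<close> \<open>0 \<le> t\<close>
      by (intro sum_mono) (metis abs_triangle_ineq abs_mult abs_of_nonneg)
    moreover have "s * (\<Sum>i\<in>I. \<bar>vx i\<bar>) + t * (\<Sum>i\<in>I. \<bar>vy i\<bar>) \<le> s * R + t * R"
      using v \<open>0 \<le> s\<close> \<open>0 \<le> t\<close> by (intro add_mono mult_left_mono)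
    ultimately show "s *\<^sub>R x + t *\<^sub>R y \<in> ?L"
      using \<open>s + t = 1\<close> by (auto simp flip: distrib_right)
  qed
qed

lemma mem_symmetric_hull_if_dominated:
  fixes w :: "nat \<Rightarrow> 'a::real_inner"
  assumes "subspace S" "\<And>i. w i \<in> S" "p \<in> S" "0 < M"
    and dominated: "\<And>a. a \<in> S \<Longrightarrow> a \<noteq> 0 \<Longrightarrow> \<exists>i<M. inner a p \<le> R * \<bar>inner a (w i)\<bar>"
  shows "p \<in> convex hull ((\<lambda>i. R *\<^sub>R w i) ` {..<M} \<union> (\<lambda>i. (- R) *\<^sub>R w i) ` {..<M})"
    (is "_ \<in> convex hull ?S")
proof (rule mem_compact_convex_if_not_separated[OF assms(1)])
  fix a assume "a \<in> S" "a \<noteq> 0"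
  then obtain i where "i < M" and i: "inner a p \<le> R * \<bar>inner a (w i)\<bar>" using dominated by blast
  define x where "x = (if 0 \<le> inner a (w i) then R else - R) *\<^sub>R w i"
  have "x \<in> convex hull ?S" using \<open>i < M\<close> hull_subset[of ?S convex] by (auto simp: x_def)
  moreover have "inner a x = R * \<bar>inner a (w i)\<bar>" by (simp add: x_def)
  ultimately show "\<exists>x\<in>convex hull ?S. inner a p \<le> inner a x" using i by metis
next
  have "?S \<subseteq> S" using assms(1,2) by (auto intro: subspace_scale subspace_neg)
  then show "convex hull ?S \<subseteq> S"
    by (rule hull_minimal[of _ _ convex, OF _ subspace_imp_convex[OF assms(1)]])
  show "compact (convex hull ?S)" by (rule finite_imp_compact_convex_hull) simp
  show "convex hull ?S \<noteq> {}" using \<open>0 < M\<close> by auto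
qed (use assms(3) in simp_all)

lemma uniform_tail_on_finite_dim:
  fixes A :: "'h::real_inner \<Rightarrow> nat \<Rightarrow> real"
  assumes A: "bounded_lin_to_c0 A" and U: "finite U" "pairwise orthogonal U"
    and "\<kappa> > 0" and bound: "\<And>z. z \<in> span U \<Longrightarrow> norm z \<le> \<kappa> * norm_inf (A z)"
  obtains M where "0 < M" "\<And>x i. x \<in> span U \<Longrightarrow> M \<le> i \<Longrightarrow> \<bar>A x i\<bar> \<le> norm_inf (A x) / 2"
proof -
  have lin: "\<And>i. linear (\<lambda>z. A z i)" and c0: "\<And>z. (\<lambda>i. A z i) \<longlonglongrightarrow> 0"
    using A unfolding bounded_lin_to_c0_def by auto
  define w where "w i = riesz_rep U (\<lambda>z. A z i)" for i
  have "w \<longlonglongrightarrow> 0" unfolding w_def by (rule riesz_rep_tendsto_zero[OF c0])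
  moreover have "1 / (2 * \<kappa>) > 0" using \<open>\<kappa> > 0\<close> by simp
  ultimately obtain N where N: "\<And>i. N \<le> i \<Longrightarrow> norm (w i) < 1 / (2 * \<kappa>)"
    unfolding LIMSEQ_iff by fastforce
  define M where "M = Suc N"
  have "\<bar>A x i\<bar> \<le> norm_inf (A x) / 2" if x: "x \<in> span U" and "M \<le> i" for x i
  proof -
    have "\<bar>A x i\<bar> = \<bar>inner (w i) x\<bar>" unfolding w_def using inner_riesz_rep[OF lin U x] by simp
    also have "\<dots> \<le> norm (w i) * norm x" by (rule Cauchy_Schwarz_ineq2)
    also have "\<dots> \<le> 1 / (2 * \<kappa>) * (\<kappa> * norm_inf (A x))"
      using N[of i] \<open>M \<le> i\<close> bound[OF x] \<open>\<kappa> > 0\<close> by (intro mult_mono) (auto simp: M_def)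
    also have "\<dots> = norm_inf (A x) / 2" using \<open>\<kappa> > 0\<close> by simp
    finally show ?thesis .
  qed
  then show ?thesis using that[of M] by (simp add: M_def)
qed

lemma summable_mult_bounded:
  assumes "in_l1 u" "\<And>i. \<bar>y i\<bar> \<le> B"
  shows "summable (\<lambda>i. u i * y i)"
proof (rule summable_comparison_test)
  show "summable (\<lambda>i. \<bar>u i\<bar> * B)" using assms(1) unfolding in_l1_def by (rule summable_mult2)
  show "\<exists>N. \<forall>i\<ge>N. norm (u i * y i) \<le> \<bar>u i\<bar> * B"
    using assms(2) by (auto simp: abs_mult intro!: mult_left_mono)
qed

lemma in_l1_add_finite_support:
  assumes "in_l1 u" and v: "\<And>i. M \<le> i \<Longrightarrow> v i = 0"
  shows "in_l1 (\<lambda>i. u i + v i)" "norm1 (\<lambda>i. u i + v i) \<le> norm1 u + (\<Sum>i<M. \<bar>v i\<bar>)"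
proof -
  have su: "summable (\<lambda>i. \<bar>u i\<bar>)" using assms(1) unfolding in_l1_def .
  have sv: "summable (\<lambda>i. \<bar>v i\<bar>)" by (rule summable_finite[of "{..<M}"]) (use v in auto)
  have tri: "\<bar>u i + v i\<bar> \<le> \<bar>u i\<bar> + \<bar>v i\<bar>" for i by (rule abs_triangle_ineq)
  have s: "summable (\<lambda>i. \<bar>u i + v i\<bar>)"
    by (rule summable_comparison_test[OF _ summable_add[OF su sv]]) (use tri in auto)
  then show "in_l1 (\<lambda>i. u i + v i)" unfolding in_l1_def .
  have "norm1 (\<lambda>i. u i + v i) \<le> (\<Sum>i. \<bar>u i\<bar> + \<bar>v i\<bar>)"
    unfolding norm1_def by (rule suminf_le[OF tri s summable_add[OF su sv]])
  also have "\<dots> = norm1 u + (\<Sum>i. \<bar>v i\<bar>)"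
    unfolding norm1_def by (rule suminf_add[OF su sv, symmetric])
  also have "(\<Sum>i. \<bar>v i\<bar>) = (\<Sum>i<M. \<bar>v i\<bar>)" by (rule suminf_finite) (use v in auto)
  finally show "norm1 (\<lambda>i. u i + v i) \<le> norm1 u + (\<Sum>i<M. \<bar>v i\<bar>)" .
qed

lemma suminf_add_finite_support:
  fixes u v y :: "nat \<Rightarrow> real"
  assumes "summable (\<lambda>i. u i * y i)" and v: "\<And>i. M \<le> i \<Longrightarrow> v i = 0"
  shows "(\<Sum>i. (u i + v i) * y i) = (\<Sum>i. u i * y i) + (\<Sum>i<M. v i * y i)"
proof -
  have sv: "summable (\<lambda>i. v i * y i)" by (rule summable_finite[of "{..<M}"]) (use v in auto)
  have "(\<Sum>i. (u i + v i) * y i) = (\<Sum>i. u i * y i + v i * y i)" by (simp add: distrib_right)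
  also have "\<dots> = (\<Sum>i. u i * y i) + (\<Sum>i. v i * y i)" by (rule suminf_add[OF assms(1) sv, symmetric])
  also have "(\<Sum>i. v i * y i) = (\<Sum>i<M. v i * y i)" by (rule suminf_finite) (use v in auto)
  finally show ?thesis .
qed

lemma finite_l1_correction:
  fixes A :: "'h::real_inner \<Rightarrow> nat \<Rightarrow> real"
  assumes A: "bounded_lin_to_c0 A" and Hn: "subspace Hn" "dim Hn \<noteq> 0"
    and ker: "\<forall>z\<in>Hn. (\<forall>i. A z i = 0) \<longrightarrow> z = 0"
    and "norm g \<le> \<delta>"
  obtains v M where "\<And>i. M \<le> i \<Longrightarrow> v i = 0" "(\<Sum>i<M. \<bar>v i\<bar>) \<le> \<delta> * kappa A Hn"
    "\<And>z. z \<in> Hn \<Longrightarrow> (\<Sum>i<M. v i * A z i) = inner z g"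
proof -
  have lin: "\<And>i. linear (\<lambda>z. A z i)" and c0: "\<And>z. (\<lambda>i. A z i) \<longlonglongrightarrow> 0"
    using A unfolding bounded_lin_to_c0_def by auto
  obtain U where U: "finite U" "pairwise orthogonal U" "span U = Hn" and "\<exists>b\<in>Hn. b \<noteq> 0"
    by (rule finite_dim_subspace_orthogonal_basis[OF Hn])
  note \<kappa> = kappa_pos_and_norm_le[OF A Hn ker]
  have \<kappa>_span: "\<And>z. z \<in> span U \<Longrightarrow> norm z \<le> kappa A Hn * norm_inf (A z)"
    unfolding U(3) by (rule \<kappa>(2))
  obtain M where "0 < M"
    and tail: "\<And>x i. x \<in> span U \<Longrightarrow> M \<le> i \<Longrightarrow> \<bar>A x i\<bar> \<le> norm_inf (A x) / 2"
    using uniform_tail_on_finite_dim[OF A U(1,2) \<kappa>(1) \<kappa>_span] by metis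
  define w where "w i = riesz_rep U (\<lambda>z. A z i)" for i
  have hw: "inner (w i) z = A z i" if "z \<in> Hn" for i z
    unfolding w_def using inner_riesz_rep[OF lin U(1,2)] that U(3) by blast
  have "w i \<in> Hn" for i unfolding w_def using riesz_rep_in_span U(3) by blast
  define R where "R = \<delta> * kappa A Hn"
  have "0 \<le> \<delta>" using \<open>norm g \<le> \<delta>\<close> norm_ge_zero order_trans by blast
  then have "0 \<le> R" using \<kappa>(1) by (simp add: R_def)
  define p where "p = orth_proj U g"
  have "p \<in> Hn" unfolding p_def using orth_proj_in_span U(3) by blast
  have hp: "inner a p = inner a g" if "a \<in> Hn" for a
    unfolding p_def using inner_orth_proj_eq[OF U(1,2)] that U(3) by blast
  have "p \<in> convex hull ((\<lambda>i. R *\<^sub>R w i) ` {..<M} \<union> (\<lambda>i. (- R) *\<^sub>R w i) ` {..<M})"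
  proof (rule mem_symmetric_hull_if_dominated[OF Hn(1) \<open>\<And>i. w i \<in> Hn\<close> \<open>p \<in> Hn\<close> \<open>0 < M\<close>])
    fix a assume "a \<in> Hn" "a \<noteq> 0"
    then have "0 < norm_inf (A a)"
      using \<kappa>(2)[of a] \<kappa>(1) norm_inf_nonneg[OF c0, of a]
      by (metis less_eq_real_def mult_zero_right norm_le_zero_iff)
    then obtain i where "i < M" and i: "norm_inf (A a) \<le> \<bar>A a i\<bar>"
      using norm_inf_attained_below[of M "A a" "norm_inf (A a) / 2"] tail \<open>a \<in> Hn\<close> U(3) by auto
    have "inner a p \<le> norm a * norm g"
      using hp[OF \<open>a \<in> Hn\<close>] norm_cauchy_schwarz by simp
    also have "\<dots> \<le> (kappa A Hn * norm_inf (A a)) * \<delta>"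
      using \<kappa>(2)[OF \<open>a \<in> Hn\<close>] \<open>norm g \<le> \<delta>\<close>
      by (intro mult_mono) (auto intro: order_trans[OF norm_ge_zero])
    also have "\<dots> = R * norm_inf (A a)" by (simp add: R_def ac_simps)
    also have "\<dots> \<le> R * \<bar>inner a (w i)\<bar>"
      using i \<open>0 \<le> R\<close> hw[OF \<open>a \<in> Hn\<close>] by (simp add: inner_commute mult_left_mono)
    finally show "\<exists>i<M. inner a p \<le> R * \<bar>inner a (w i)\<bar>" using \<open>i < M\<close> by blast
  qed
  then obtain v where v: "p = (\<Sum>i<M. v i *\<^sub>R w i)" "(\<Sum>i<M. \<bar>v i\<bar>) \<le> R"
    using convex_hull_signed_subset_l1_ball[OF finite_lessThan \<open>0 \<le> R\<close>, of w] by auto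
  show ?thesis
  proof (rule that[where v = "\<lambda>i. if i < M then v i else 0" and M = M])
    show "(\<Sum>i<M. \<bar>if i < M then v i else 0\<bar>) \<le> \<delta> * kappa A Hn"
      using v(2) by (simp add: R_def)
    fix z assume "z \<in> Hn"
    have "(\<Sum>i<M. (if i < M then v i else 0) * A z i) = (\<Sum>i<M. v i * inner (w i) z)"
      using hw[OF \<open>z \<in> Hn\<close>] by simp
    also have "\<dots> = inner p z" by (simp add: v(1) inner_sum_left)
    also have "\<dots> = inner z g" using hp[OF \<open>z \<in> Hn\<close>] by (simp add: inner_commute)
    finally show "(\<Sum>i<M. (if i < M then v i else 0) * A z i) = inner z g" .
  qed simp
qed

theorem lemma1:
  fixes A :: "'h::{real_inner, complete_space} \<Rightarrow> nat \<Rightarrow> real"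
    and Hn :: "'h set" and n :: nat
    and f fdelta :: 'h and udag un :: "nat \<Rightarrow> real" and delta :: real
  assumes A: "bounded_lin_to_c0 A"
    and Hn: "subspace Hn" "dim Hn = n" "n \<ge> 1"
    and ker: "\<forall>z\<in>Hn. (\<forall>i. A z i = 0) \<longrightarrow> z = 0"
    and udag: "in_l1 udag" "is_adj_image A udag f"
    and delta: "delta > 0" "norm (fdelta - f) \<le> delta"
    and un_feas: "in_l1 un" "\<forall>z\<in>Hn. (\<Sum>i. un i * A z i) = inner z fdelta"
    and un_min: "\<forall>u. in_l1 u \<and> (\<forall>z\<in>Hn. (\<Sum>i. u i * A z i) = inner z fdelta)
                   \<longrightarrow> norm1 un \<le> norm1 u"
  shows "norm1 un \<le> delta * kappa A Hn + norm1 udag"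
proof -
  obtain v M where v: "\<And>i. M \<le> i \<Longrightarrow> v i = 0" "(\<Sum>i<M. \<bar>v i\<bar>) \<le> delta * kappa A Hn"
      "\<And>z. z \<in> Hn \<Longrightarrow> (\<Sum>i<M. v i * A z i) = inner z (fdelta - f)"
    using finite_l1_correction[OF A Hn(1) _ ker delta(2)] Hn(2,3) by (metis not_one_le_zero)
  define u where "u i = udag i + v i" for i
  have "in_l1 u" "norm1 u \<le> norm1 udag + delta * kappa A Hn"
    using in_l1_add_finite_support[of udag M v, OF udag(1) v(1)] v(2) by (auto simp: u_def[abs_def])
  moreover have "(\<Sum>i. u i * A z i) = inner z fdelta" if "z \<in> Hn" for z
  proof -
    obtain B where "\<And>i. \<bar>A z i\<bar> \<le> B" using A unfolding bounded_lin_to_c0_def by blast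
    then have "(\<Sum>i. u i * A z i) = (\<Sum>i. udag i * A z i) + (\<Sum>i<M. v i * A z i)"
      unfolding u_def by (rule suminf_add_finite_support[OF summable_mult_bounded[OF udag(1)] v(1)])
    also have "\<dots> = inner f z + inner z (fdelta - f)"
      using udag(2) v(3)[OF that] unfolding is_adj_image_def by simp
    finally show ?thesis by (simp add: inner_diff_right inner_commute)
  qed
  ultimately have "norm1 un \<le> norm1 u" using un_min by blast
  with \<open>norm1 u \<le> norm1 udag + delta * kappa A Hn\<close> show ?thesis by linarith
qed

end
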